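(* Assume $N\ge 2$ and $2\beta T>1$. Run the Exponentially Weighted Forecaster (EWF) policy with parameters \[ \gamma=\frac{1}{2\beta T},\qquad \eta=\sqrt{\frac{\log N}{4\beta^2T\log\left(2\beta TN^3+N+2\right)}}. \] Then for every demand sequence $d_1,\dots,d_T\in\mathcal D$, \[ \mathbb E[\mathcal R(T)]\le 4\beta\sqrt{T\log N\log\left(2\beta TN^3+N+2\right)}+2\beta\sqrt{T\log N}+1 . \]
   Context: Fix integers $T\ge1$, $D\ge 1$ and reals $h,b>0$. Let $\mathcal T=\{1,\dots,T\}$, $\mathcal D=\{0,1,\dots,D\}$, let $\mathcal I\subseteq\mathcal D$ with $|\mathcal I|=N$, let $\beta=D\max\{h,b\}$, and let $c(i,d)=h(i-d)^+ + b(d-i)^+$. Logarithms are natural. For $d\in\mathcal D$, $e_d\in\mathbb R^{D+1}$ is the standard basis vector (coordinates indexed by $\{0,\dots,D\}$) with a $1$ in coordinate $d$. For $i\in\mathcal D$, the signal matrix $\mathbb S_i$ is the $(i+1)\times(D+1)$ $0/1$ matrix with rows indexed by $k\in\{1,\dots,i+1\}$ and columns by $d\in\{0,\dots,D\}$, with $\mathbb S_i(k,d)=1$ iff $\min\{i,d\}=k-1$; and $v_i\in\mathbb R^{i+1}$ is defined by $v_i(k)=hi-(h+b)(k-1)$, $k=1,\dots,i+1$. A demand sequence $d_1,\dots,d_T\in\mathcal D$ is fixed arbitrarily in advance (it does not depend on the policy's decisions). EWF policy with parameters $\eta>0$, $\gamma\in(0,1)$: set $W_i(0)=1$ for all $i\in\mathcal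 I$. For $t=1,\dots,T$: let $W(t-1)=\sum_{i\in\mathcal I}W_i(t-1)$ and $p_i(t)=(1-\gamma)\frac{W_i(t-1)}{W(t-1)}+\frac{\gamma}{N}$; draw $I_t\in\mathcal I$ with $\mathbb P(I_t=i\mid I_1,\dots,I_{t-1})=p_i(t)$; observe the sales $\min\{I_t,d_t\}$; for each $i\in\mathcal I$ compute $\tilde c(i,d_t)=\frac{\mathbb 1\{I_t\ge i\}}{\mathbb P_t(I_t\ge i)}\left(v_i^T\mathbb S_ie_{d_t}+\beta\right)$ with $\mathbb P_t(I_t\ge i)=\sum_{j\in\mathcal I,\,j\ge i}p_j(t)$; and set $W_i(t)=W_i(t-1)e^{-\eta\tilde c(i,d_t)}$. The regret is $\mathcal R(T)=\sum_{t\in\mathcal T}c(I_t,d_t)-\min_{i\in\mathcal I}\sum_{t\in\mathcal T}c(i,d_t)$, and the expectation is over the policy's randomization. *)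

theory Defs
  imports Complex_Main
begin

definition nv_cost :: "real \<Rightarrow> real \<Rightarrow> nat \<Rightarrow> nat \<Rightarrow> real" where
  "nv_cost h b i d = h * max (real i - real d) 0 + b * max (real d - real i) 0"

definition ewf_beta :: "nat \<Rightarrow> real \<Rightarrow> real \<Rightarrow> real" where
  "ewf_beta D h b = real D * max h b"

(* Signal matrix S_i: entry (k,d), k \<in> {1..i+1}, d \<in> {0..D}; equals 1 iff min i d = k-1 *)
definition signal_mat :: "nat \<Rightarrow> nat \<Rightarrow> nat \<Rightarrow> real" where
  "signal_mat i k d = (if min i d = k - 1 then 1 else 0)"

definition signal_vec :: "real \<Rightarrow> real \<Rightarrow> nat \<Rightarrow> nat \<Rightarrow> real" where
  "signal_vec h b i k = h * real i - (h + b) * (real k - 1)"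

definition signal_term :: "real \<Rightarrow> real \<Rightarrow> nat \<Rightarrow> nat \<Rightarrow> real" where
  "signal_term h b i d = (\<Sum>k\<in>{1..i+1}. signal_vec h b i k * signal_mat i k d)"

definition ewf_prob :: "nat set \<Rightarrow> real \<Rightarrow> (nat \<Rightarrow> real) \<Rightarrow> nat \<Rightarrow> real" where
  "ewf_prob I \<gamma> W j = (1 - \<gamma>) * W j / (\<Sum>k\<in>I. W k) + \<gamma> / real (card I)"

(* Weights W(t) after the history hs = [I_t, ..., I_1] (most recent first);
   t = length hs.  W(0) = 1. *)
primrec ewf_W :: "nat set \<Rightarrow> nat \<Rightarrow> real \<Rightarrow> real \<Rightarrow> real \<Rightarrow> real \<Rightarrow> (nat \<Rightarrow> nat)
    \<Rightarrow> nat list \<Rightarrow> nat \<Rightarrow> real" where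
  "ewf_W I D h b \<eta> \<gamma> d [] = (\<lambda>i. 1)"
| "ewf_W I D h b \<eta> \<gamma> d (x # hs) =
    (let W = ewf_W I D h b \<eta> \<gamma> d hs;
         p = ewf_prob I \<gamma> W;
         t = Suc (length hs);
         Pge = (\<lambda>i. \<Sum>j\<in>{j\<in>I. i \<le> j}. p j);
         ct = (\<lambda>i. (if i \<le> x then 1 else 0) / Pge i
                     * (signal_term h b i (d t) + ewf_beta D h b))
     in (\<lambda>i. W i * exp (- \<eta> * ct i)))"

primrec ewf_path_prob :: "nat set \<Rightarrow> nat \<Rightarrow> real \<Rightarrow> real \<Rightarrow> real \<Rightarrow> real \<Rightarrow> (nat \<Rightarrow> nat)
    \<Rightarrow> nat list \<Rightarrow> real" where
  "ewf_path_prob I D h b \<eta> \<gamma> d [] = 1"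
| "ewf_path_prob I D h b \<eta> \<gamma> d (x # hs) =
    ewf_path_prob I D h b \<eta> \<gamma> d hs * ewf_prob I \<gamma> (ewf_W I D h b \<eta> \<gamma> d hs) x"

(* Regret of a chronological decision sequence xs = [I_1, ..., I_T] *)
definition regret :: "nat set \<Rightarrow> real \<Rightarrow> real \<Rightarrow> (nat \<Rightarrow> nat) \<Rightarrow> nat \<Rightarrow> nat list \<Rightarrow> real" where
  "regret I h b d T xs =
     (\<Sum>t\<in>{1..T}. nv_cost h b (xs ! (t - 1)) (d t))
     - Min ((\<lambda>i. \<Sum>t\<in>{1..T}. nv_cost h b i (d t)) ` I)"

definition ewf_expected_regret :: "nat set \<Rightarrow> nat \<Rightarrow> real \<Rightarrow> real \<Rightarrow> real \<Rightarrow> real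
    \<Rightarrow> (nat \<Rightarrow> nat) \<Rightarrow> nat \<Rightarrow> real" where
  "ewf_expected_regret I D h b \<eta> \<gamma> d T =
     (\<Sum>hs\<in>{hs. set hs \<subseteq> I \<and> length hs = T}.
        ewf_path_prob I D h b \<eta> \<gamma> d hs * regret I h b d T (rev hs))"

end

theory Submission
  imports Defs
begin

text \<open>The estimate \<open>c\<^sup>~(i, d\<^sub>t)\<close> is nonzero only if \<open>I\<^sub>t \<ge> i\<close>; then the observed sales
  \<open>min {I\<^sub>t, d\<^sub>t}\<close> determine \<open>min {i, d\<^sub>t}\<close> and hence the signal \<open>c(i, d\<^sub>t) - b d\<^sub>t\<close>. Dividing by
  \<open>P\<^sub>t(I\<^sub>t \<ge> i)\<close> makes it an unbiased estimate of the shifted loss \<open>c(i, d\<^sub>t) + \<beta> - b d\<^sub>t \<in> [0, 2\<beta>]\<close>.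
  The exponential-weights potential argument bounds the estimated regret pathwise by \<open>ln N / \<eta>\<close>
  plus \<open>\<eta>/2\<close> times the weighted second moments of the estimates. In expectation these moments are
  at most \<open>8\<beta>\<^sup>2 \<Sum>\<^sub>i p\<^sub>i / P(I\<^sub>t \<ge> i) \<le> 8\<beta>\<^sup>2 (1 + ln (N / \<gamma>))\<close>, by a telescoping bound on ratios to
  tail sums, while the forced exploration costs \<open>2\<beta>\<gamma>\<close> per round. Balancing \<open>\<eta>\<close> gives the bound
  when \<open>\<beta>T \<ge> 1\<close>; otherwise the trivial bound \<open>\<beta>T < 1\<close> suffices.\<close>

lemma exp_neg_le_quadratic:
  fixes x :: real
  assumes "0 \<le> x"
  shows "exp (- x) \<le> 1 - x + x\<^sup>2 / 2"
proof -
  let ?f = "\<lambda>x::real. 1 - x + x\<^sup>2 / 2 - exp (- x)"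
  have "?f 0 \<le> ?f x"
  proof (rule DERIV_nonneg_imp_nondecreasing[OF assms])
    fix y :: real
    have "DERIV ?f y :> - 1 + y + exp (- y)"
      by (auto intro!: derivative_eq_intros)
    moreover have "0 \<le> - 1 + y + exp (- y)"
      using exp_ge_add_one_self[of "- y"] by linarith
    ultimately show "\<exists>z. DERIV ?f y :> z \<and> 0 \<le> z" by blast
  qed
  then show ?thesis by simp
qed

lemma sum_div_tail_sum_le_ln:
  fixes p :: "'a::linorder \<Rightarrow> real"
  assumes "finite S" "S \<noteq> {}" "\<And>i. i \<in> S \<Longrightarrow> 0 < p i"
  shows "(\<Sum>i\<in>S. p i / (\<Sum>j\<in>{j\<in>S. i \<le> j}. p j)) \<le> 1 + ln (sum p S / p (Max S))"
  using assms
proof (induction S rule: finite_linorder_min_induct)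
  case empty
  then show ?case by simp
next
  case (insert m A)
  show ?case
  proof (cases "A = {}")
    case True
    then have "{j \<in> insert m A. m \<le> j} = {m}" by auto
    with True insert.prems show ?thesis by simp
  next
    case False
    define P where "P = sum p A"
    have P_pos: "0 < P"
      unfolding P_def using False insert by (intro sum_pos) auto
    have pm_pos: "0 < p m" using insert.prems by simp
    have m_notin: "m \<notin> A" using insert.hyps by auto
    have tails: "\<And>i. i \<in> A \<Longrightarrow> {j \<in> insert m A. i \<le> j} = {j \<in> A. i \<le> j}"
      and tail_m: "{j \<in> insert m A. m \<le> j} = insert m A"
      using insert.hyps by auto
    have Max_eq: "Max (insert m A) = Max A"
      using insert.hyps False by (metis Max_in Max_insert max.absorb2 less_imp_le)
    have "0 < p (Max A)" using insert.prems False insert.hyps Max_in by auto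
    \<comment> \<open>\<open>1 - 1/x \<le> ln x\<close> with \<open>x = (p m + P) / P\<close>\<close>
    have head: "p m / (p m + P) \<le> ln ((p m + P) / P)"
      using ln_le_minus_one[of "P / (p m + P)"] P_pos pm_pos
      by (simp add: ln_div field_simps)
    have "(\<Sum>i\<in>insert m A. p i / (\<Sum>j\<in>{j\<in>insert m A. i \<le> j}. p j))
        = p m / (p m + P) + (\<Sum>i\<in>A. p i / (\<Sum>j\<in>{j\<in>A. i \<le> j}. p j))"
      using insert.hyps m_notin tails tail_m by (simp add: P_def)
    also have "\<dots> \<le> ln ((p m + P) / P) + (1 + ln (P / p (Max A)))"
      using head insert.IH False insert.prems unfolding P_def by fastforce
    also have "\<dots> = 1 + ln ((p m + P) / p (Max A))"
      using P_pos pm_pos \<open>0 < p (Max A)\<close> by (simp add: ln_div)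
    finally show ?thesis
      using insert.hyps m_notin Max_eq by (simp add: P_def)
  qed
qed

section \<open>Expectations over decision histories\<close>

definition histories :: "'a set \<Rightarrow> nat \<Rightarrow> 'a list set" where
  "histories A n = {hs. set hs \<subseteq> A \<and> length hs = n}"

primrec history_prob :: "('a list \<Rightarrow> 'a \<Rightarrow> real) \<Rightarrow> 'a list \<Rightarrow> real" where
  "history_prob K [] = 1"
| "history_prob K (x # hs) = history_prob K hs * K hs x"

definition history_expectation ::
  "'a set \<Rightarrow> ('a list \<Rightarrow> 'a \<Rightarrow> real) \<Rightarrow> nat \<Rightarrow> ('a list \<Rightarrow> real) \<Rightarrow> real" where
  "history_expectation A K n g = (\<Sum>hs\<in>histories A n. history_prob K hs * g hs)"

primrec history_sum :: "('a \<Rightarrow> 'a list \<Rightarrow> real) \<Rightarrow> 'a list \<Rightarrow> real" where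
  "history_sum f [] = 0"
| "history_sum f (x # hs) = history_sum f hs + f x hs"

lemma history_sum_chronological:
  "history_sum (\<lambda>x hs. f x (Suc (length hs))) hs = (\<Sum>t = 1..length hs. f (rev hs ! (t - 1)) t)"
proof (induction hs)
  case Nil
  then show ?case by simp
next
  case (Cons x hs)
  have "(\<Sum>t = 1..length hs. f (rev (x # hs) ! (t - 1)) t) = (\<Sum>t = 1..length hs. f (rev hs ! (t - 1)) t)"
    by (intro sum.cong) (auto simp: nth_append)
  with Cons show ?case by (simp add: nth_append)
qed

lemma histories_0: "histories A 0 = {[]}"
  by (auto simp: histories_def)

lemma sum_histories_Suc:
  "(\<Sum>hs\<in>histories A (Suc n). g hs) = (\<Sum>hs\<in>histories A n. \<Sum>x\<in>A. g (x # hs))"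
proof -
  have "histories A (Suc n) = (\<lambda>(x, hs). x # hs) ` (A \<times> histories A n)"
    by (auto simp: histories_def length_Suc_conv image_iff)
  moreover have "inj_on (\<lambda>(x, hs). x # hs) (A \<times> histories A n)"
    by (auto simp: inj_on_def)
  ultimately have "(\<Sum>hs\<in>histories A (Suc n). g hs) = (\<Sum>(x, hs)\<in>A \<times> histories A n. g (x # hs))"
    by (simp add: sum.reindex case_prod_beta')
  also have "\<dots> = (\<Sum>x\<in>A. \<Sum>hs\<in>histories A n. g (x # hs))"
    by (rule sum.cartesian_product[symmetric])
  finally show ?thesis by (simp add: sum.swap[of _ A])
qed

locale choice_kernel =
  fixes A :: "'a set" and K :: "'a list \<Rightarrow> 'a \<Rightarrow> real"
  assumes kernel_nonneg: "\<And>hs x. x \<in> A \<Longrightarrow> 0 \<le> K hs x"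
    and kernel_sum: "\<And>hs. (\<Sum>x\<in>A. K hs x) = 1"
begin

abbreviation E :: "nat \<Rightarrow> ('a list \<Rightarrow> real) \<Rightarrow> real" where
  "E \<equiv> history_expectation A K"

lemma history_prob_nonneg: "set hs \<subseteq> A \<Longrightarrow> 0 \<le> history_prob K hs"
  by (induction hs) (auto intro!: mult_nonneg_nonneg kernel_nonneg)

lemma expectation_Suc: "E (Suc n) g = E n (\<lambda>hs. \<Sum>x\<in>A. K hs x * g (x # hs))"
  unfolding history_expectation_def sum_histories_Suc
  by (simp add: sum_distrib_left mult.assoc)

lemma expectation_const: "E n (\<lambda>_. c) = c"
proof (induction n)
  case 0
  then show ?case by (simp add: history_expectation_def histories_0)
next
  case (Suc n)
  then show ?case
    by (simp add: expectation_Suc sum_distrib_right[symmetric] kernel_sum)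
qed

lemma expectation_add: "E n (\<lambda>hs. f hs + g hs) = E n f + E n g"
  by (simp add: history_expectation_def distrib_left sum.distrib)

lemma expectation_mono:
  "(\<And>hs. hs \<in> histories A n \<Longrightarrow> f hs \<le> g hs) \<Longrightarrow> E n f \<le> E n g"
  unfolding history_expectation_def
  by (intro sum_mono mult_left_mono) (auto simp: histories_def history_prob_nonneg)

lemma expectation_cong:
  "(\<And>hs. hs \<in> histories A n \<Longrightarrow> f hs = g hs) \<Longrightarrow> E n f = E n g"
  by (simp add: history_expectation_def)

lemma expectation_history_sum:
  "E n (history_sum f) = (\<Sum>m<n. E m (\<lambda>hs. \<Sum>x\<in>A. K hs x * f x hs))"
proof (induction n)
  case 0
  then show ?case by (simp add: history_expectation_def histories_0)
next
  case (Suc n)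
  have "E (Suc n) (history_sum f) = E n (\<lambda>hs. history_sum f hs + (\<Sum>x\<in>A. K hs x * f x hs))"
    by (simp add: expectation_Suc distrib_left sum.distrib sum_distrib_right[symmetric] kernel_sum)
  with Suc show ?case by (simp add: expectation_add)
qed

end

section \<open>The exponentially weighted forecaster\<close>

lemma signal_term_eq_cost: "signal_term h b i d = nv_cost h b i d - b * real d"
proof -
  have "signal_term h b i d = (\<Sum>k\<in>{1..i+1}. if k = min i d + 1 then signal_vec h b i k else 0)"
    unfolding signal_term_def signal_mat_def by (intro sum.cong) auto
  also have "\<dots> = signal_vec h b i (min i d + 1)" by simp
  also have "\<dots> = nv_cost h b i d - b * real d"
    unfolding signal_vec_def nv_cost_def by (cases "i \<le> d") (auto simp: min_def algebra_simps)
  finally show ?thesis .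
qed

lemma nv_cost_nonneg: "0 \<le> h \<Longrightarrow> 0 \<le> b \<Longrightarrow> 0 \<le> nv_cost h b i d"
  by (simp add: nv_cost_def)

lemma nv_cost_le_beta:
  assumes "0 \<le> h" "0 \<le> b" "i \<le> D" "d \<le> D"
  shows "nv_cost h b i d \<le> ewf_beta D h b"
proof -
  have "h * max (real i - real d) 0 \<le> max h b * D" "b * max (real d - real i) 0 \<le> max h b * D"
    using assms by (auto intro!: mult_mono)
  moreover have "max (real i - real d) 0 = 0 \<or> max (real d - real i) 0 = 0" by auto
  ultimately show ?thesis
    unfolding nv_cost_def ewf_beta_def by (auto simp: mult.commute)
qed

lemma ewf_path_prob_eq_history_prob:
  "ewf_path_prob I D h b \<eta> \<gamma> d hs = history_prob (\<lambda>hs. ewf_prob I \<gamma> (ewf_W I D h b \<eta> \<gamma> d hs)) hs"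
  by (induction hs) simp_all

locale ewf =
  fixes I :: "nat set" and D :: nat and h b \<eta> \<gamma> :: real and d :: "nat \<Rightarrow> nat" and T :: nat
  assumes finite_I: "finite I" and I_nonempty: "I \<noteq> {}" and I_subset: "I \<subseteq> {0..D}"
    and h_nonneg: "0 \<le> h" and b_nonneg: "0 \<le> b"
    and eta_pos: "0 < \<eta>" and gamma_pos: "0 < \<gamma>" and gamma_less_1: "\<gamma> < 1"
    and demand_le: "\<forall>t\<in>{1..T}. d t \<le> D"
begin

abbreviation \<beta> :: real where "\<beta> \<equiv> ewf_beta D h b"
abbreviation weight :: "nat list \<Rightarrow> nat \<Rightarrow> real" where "weight \<equiv> ewf_W I D h b \<eta> \<gamma> d"
abbreviation prob :: "nat list \<Rightarrow> nat \<Rightarrow> real" where "prob hs \<equiv> ewf_prob I \<gamma> (weight hs)"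

definition total_weight :: "nat list \<Rightarrow> real" where
  "total_weight hs = (\<Sum>i\<in>I. weight hs i)"

definition weight_share :: "nat list \<Rightarrow> nat \<Rightarrow> real" where
  "weight_share hs i = weight hs i / total_weight hs"

definition prob_at_least :: "nat list \<Rightarrow> nat \<Rightarrow> real" where
  "prob_at_least hs i = (\<Sum>j\<in>{j\<in>I. i \<le> j}. prob hs j)"

text \<open>The loss \<open>c(i, d\<^sub>t)\<close> shifted by \<open>\<beta> - b d\<^sub>t\<close>: nonnegative, and the shift does not depend
  on \<open>i\<close>, so it cancels in the regret.\<close>
definition loss :: "nat \<Rightarrow> nat \<Rightarrow> real" where
  "loss i t = signal_term h b i (d t) + \<beta>"

definition loss_estimate :: "nat list \<Rightarrow> nat \<Rightarrow> nat \<Rightarrow> real" where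
  "loss_estimate hs x i = (if i \<le> x then 1 else 0) / prob_at_least hs i * loss i (Suc (length hs))"

lemma weight_Cons: "weight (x # hs) i = weight hs i * exp (- \<eta> * loss_estimate hs x i)"
  by (simp add: Let_def loss_estimate_def prob_at_least_def loss_def)

declare ewf_W.simps(2)[simp del]

lemma weight_pos: "0 < weight hs i"
  by (induction hs arbitrary: i) (simp_all add: weight_Cons)

lemma total_weight_pos: "0 < total_weight hs"
  unfolding total_weight_def using finite_I I_nonempty weight_pos by (intro sum_pos) auto

lemma weight_share_nonneg: "0 \<le> weight_share hs i"
  using weight_pos total_weight_pos by (simp add: weight_share_def less_imp_le)

lemma sum_weight_share: "(\<Sum>i\<in>I. weight_share hs i) = 1"
  using total_weight_pos[of hs] by (simp add: weight_share_def total_weight_def flip: sum_divide_distrib)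

lemma prob_eq: "prob hs j = (1 - \<gamma>) * weight_share hs j + \<gamma> / card I"
  by (simp add: ewf_prob_def weight_share_def total_weight_def)

lemma prob_ge: "\<gamma> / card I \<le> prob hs j"
  using weight_share_nonneg gamma_less_1 by (simp add: prob_eq)

lemma prob_pos: "0 < prob hs j"
  using prob_ge[of hs j] gamma_pos finite_I I_nonempty card_gt_0_iff
  by (metis divide_pos_pos of_nat_0_less_iff order_less_le_trans)

lemma sum_prob: "(\<Sum>j\<in>I. prob hs j) = 1"
  using finite_I I_nonempty
  by (simp add: prob_eq sum.distrib sum_weight_share flip: sum_distrib_left)

sublocale choice_kernel I prob
  by unfold_locales (simp_all add: prob_pos less_imp_le sum_prob)

lemma prob_at_least_pos: "i \<in> I \<Longrightarrow> 0 < prob_at_least hs i"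
  unfolding prob_at_least_def using finite_I prob_pos by (intro sum_pos) auto

lemma loss_eq: "loss i t = nv_cost h b i (d t) + (\<beta> - b * d t)"
  by (simp add: loss_def signal_term_eq_cost)

lemma loss_bounds:
  assumes "i \<in> I" "t \<in> {1..T}"
  shows "0 \<le> loss i t" "loss i t \<le> 2 * \<beta>"
proof -
  have "i \<le> D" "d t \<le> D" using assms I_subset demand_le by auto
  then have "nv_cost h b i (d t) \<le> \<beta>" "b * d t \<le> max h b * D"
    using h_nonneg b_nonneg nv_cost_le_beta by (auto intro!: mult_mono)
  moreover have "0 \<le> nv_cost h b i (d t)" "0 \<le> b * d t"
    using h_nonneg b_nonneg by (simp_all add: nv_cost_nonneg)
  ultimately show "0 \<le> loss i t" "loss i t \<le> 2 * \<beta>"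
    unfolding loss_eq by (simp_all add: ewf_beta_def mult.commute)
qed

lemma loss_estimate_nonneg: "i \<in> I \<Longrightarrow> length hs < T \<Longrightarrow> 0 \<le> loss_estimate hs x i"
  unfolding loss_estimate_def
  using prob_at_least_pos[of i hs] loss_bounds(1)[of i "Suc (length hs)"] by simp

lemma sum_prob_indicator: "(\<Sum>x\<in>I. prob hs x * (if i \<le> x then 1 else 0)) = prob_at_least hs i"
  unfolding prob_at_least_def using finite_I by (simp add: sum.inter_filter[symmetric] if_distrib cong: if_cong)

lemma expected_loss_estimate:
  assumes "i \<in> I"
  shows "(\<Sum>x\<in>I. prob hs x * loss_estimate hs x i) = loss i (Suc (length hs))"
proof -
  have "(\<Sum>x\<in>I. prob hs x * loss_estimate hs x i)
      = (\<Sum>x\<in>I. prob hs x * (if i \<le> x then 1 else 0)) * (loss i (Suc (length hs)) / prob_at_least hs i)"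
    unfolding loss_estimate_def sum_distrib_right by (intro sum.cong) auto
  then show ?thesis using sum_prob_indicator prob_at_least_pos[OF assms, of hs] by simp
qed

lemma expected_loss_estimate_sq:
  assumes "i \<in> I"
  shows "(\<Sum>x\<in>I. prob hs x * (loss_estimate hs x i)\<^sup>2) = (loss i (Suc (length hs)))\<^sup>2 / prob_at_least hs i"
proof -
  have "(\<Sum>x\<in>I. prob hs x * (loss_estimate hs x i)\<^sup>2)
      = (\<Sum>x\<in>I. prob hs x * (if i \<le> x then 1 else 0)) * ((loss i (Suc (length hs)))\<^sup>2 / (prob_at_least hs i)\<^sup>2)"
    unfolding loss_estimate_def sum_distrib_right by (intro sum.cong) (auto simp: power_divide)
  then show ?thesis
    using sum_prob_indicator prob_at_least_pos[OF assms, of hs] by (simp add: power2_eq_square)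
qed

lemma total_weight_Cons:
  "total_weight (x # hs) = total_weight hs * (\<Sum>i\<in>I. weight_share hs i * exp (- \<eta> * loss_estimate hs x i))"
  using total_weight_pos[of hs]
  by (simp add: total_weight_def weight_share_def weight_Cons sum_distrib_left)

lemma ln_total_weight_Cons_le:
  assumes "length hs < T"
  shows "ln (total_weight (x # hs)) - ln (total_weight hs)
    \<le> - \<eta> * (\<Sum>i\<in>I. weight_share hs i * loss_estimate hs x i)
      + \<eta>\<^sup>2 / 2 * (\<Sum>i\<in>I. weight_share hs i * (loss_estimate hs x i)\<^sup>2)"
proof -
  define z where "z = (\<Sum>i\<in>I. weight_share hs i * exp (- \<eta> * loss_estimate hs x i))"
  have z: "total_weight (x # hs) = total_weight hs * z"
    unfolding z_def by (rule total_weight_Cons)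
  then have "0 < z"
    using total_weight_pos[of hs] total_weight_pos[of "x # hs"] zero_less_mult_pos by metis
  then have "ln (total_weight (x # hs)) - ln (total_weight hs) = ln z"
    using z total_weight_pos[of hs] by (simp add: ln_mult)
  also have "\<dots> \<le> z - 1"
    using \<open>0 < z\<close> by (rule ln_le_minus_one)
  also have "z \<le> (\<Sum>i\<in>I. weight_share hs i * (1 - \<eta> * loss_estimate hs x i + (\<eta> * loss_estimate hs x i)\<^sup>2 / 2))"
    unfolding z_def
    using exp_neg_le_quadratic loss_estimate_nonneg[OF _ assms] eta_pos
    by (intro sum_mono mult_left_mono weight_share_nonneg) simp_all
  also have "\<dots> = 1 - \<eta> * (\<Sum>i\<in>I. weight_share hs i * loss_estimate hs x i)
      + \<eta>\<^sup>2 / 2 * (\<Sum>i\<in>I. weight_share hs i * (loss_estimate hs x i)\<^sup>2)"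
    by (simp add: algebra_simps sum.distrib sum_subtractf sum_distrib_left sum_weight_share
        power_mult_distrib flip: sum_divide_distrib)
  finally show ?thesis by simp
qed

definition estimated_regret_step :: "nat \<Rightarrow> nat \<Rightarrow> nat list \<Rightarrow> real" where
  "estimated_regret_step i\<^sub>0 x hs = (\<Sum>i\<in>I. weight_share hs i * loss_estimate hs x i) - loss_estimate hs x i\<^sub>0
     - \<eta> / 2 * (\<Sum>i\<in>I. weight_share hs i * (loss_estimate hs x i)\<^sup>2)"

text \<open>The potential \<open>ln (total_weight hs)\<close> starts at \<open>ln N\<close> and never falls below
  \<open>ln (weight hs i\<^sub>0)\<close>.\<close>
lemma history_sum_estimated_regret_le:
  assumes "length hs \<le> T" "i\<^sub>0 \<in> I"
  shows "history_sum (estimated_regret_step i\<^sub>0) hs \<le> ln (card I) / \<eta>"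
proof -
  have potential: "\<eta> * history_sum (estimated_regret_step i\<^sub>0) hs
      \<le> ln (card I) - ln (total_weight hs) + ln (weight hs i\<^sub>0)"
    using assms(1)
  proof (induction hs)
    case Nil
    then show ?case by (simp add: total_weight_def)
  next
    case (Cons x hs)
    have "ln (weight (x # hs) i\<^sub>0) = ln (weight hs i\<^sub>0) - \<eta> * loss_estimate hs x i\<^sub>0"
      using weight_pos[of hs i\<^sub>0] by (simp add: weight_Cons ln_mult)
    with Cons ln_total_weight_Cons_le[of hs x] show ?case
      by (simp add: estimated_regret_step_def algebra_simps power2_eq_square)
  qed
  have "weight hs i\<^sub>0 \<le> total_weight hs"
    unfolding total_weight_def using assms(2) finite_I weight_pos
    by (intro member_le_sum) (auto simp: less_imp_le)
  then have "ln (weight hs i\<^sub>0) \<le> ln (total_weight hs)"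
    using weight_pos[of hs i\<^sub>0] by simp
  with potential eta_pos show ?thesis
    by (simp add: pos_le_divide_eq mult.commute)
qed

lemma sum_prob_div_prob_at_least_le: "(\<Sum>i\<in>I. prob hs i / prob_at_least hs i) \<le> 1 + ln (card I / \<gamma>)"
proof -
  have "(\<Sum>i\<in>I. prob hs i / prob_at_least hs i) \<le> 1 + ln (1 / prob hs (Max I))"
    using sum_div_tail_sum_le_ln[OF finite_I I_nonempty, of "prob hs"]
    by (simp add: prob_pos prob_at_least_def sum_prob)
  also have "\<dots> \<le> 1 + ln (card I / \<gamma>)"
    using prob_ge[of hs "Max I"] prob_pos[of hs "Max I"] gamma_pos finite_I I_nonempty
    by (simp add: field_simps card_gt_0_iff)
  finally show ?thesis .
qed

lemma expected_estimated_regret_step: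
  fixes hs :: "nat list"
  assumes "i\<^sub>0 \<in> I"
  defines "t \<equiv> Suc (length hs)"
  shows "(\<Sum>x\<in>I. prob hs x * estimated_regret_step i\<^sub>0 x hs)
    = (\<Sum>i\<in>I. weight_share hs i * loss i t) - loss i\<^sub>0 t
      - \<eta> / 2 * (\<Sum>i\<in>I. weight_share hs i * (loss i t)\<^sup>2 / prob_at_least hs i)"
proof -
  have swap: "(\<Sum>x\<in>I. prob hs x * (\<Sum>i\<in>I. weight_share hs i * f x i))
      = (\<Sum>i\<in>I. weight_share hs i * (\<Sum>x\<in>I. prob hs x * f x i))" for f
  proof -
    have "(\<Sum>x\<in>I. prob hs x * (\<Sum>i\<in>I. weight_share hs i * f x i))
        = (\<Sum>x\<in>I. \<Sum>i\<in>I. weight_share hs i * (prob hs x * f x i))"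
      by (simp add: sum_distrib_left mult.left_commute)
    also have "\<dots> = (\<Sum>i\<in>I. weight_share hs i * (\<Sum>x\<in>I. prob hs x * f x i))"
      by (subst sum.swap) (simp add: sum_distrib_left)
    finally show ?thesis .
  qed
  have "(\<Sum>x\<in>I. prob hs x * estimated_regret_step i\<^sub>0 x hs)
      = (\<Sum>x\<in>I. prob hs x * (\<Sum>i\<in>I. weight_share hs i * loss_estimate hs x i))
        - (\<Sum>x\<in>I. prob hs x * loss_estimate hs x i\<^sub>0)
        - \<eta> / 2 * (\<Sum>x\<in>I. prob hs x * (\<Sum>i\<in>I. weight_share hs i * (loss_estimate hs x i)\<^sup>2))"
    by (simp add: estimated_regret_step_def right_diff_distrib sum_subtractf sum_distrib_left mult_ac)
  then show ?thesis
    using assms(1) by (simp add: swap expected_loss_estimate expected_loss_estimate_sq t_def)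
qed

lemma expected_loss_le_weighted_loss:
  assumes "t \<in> {1..T}"
  shows "(\<Sum>x\<in>I. prob hs x * loss x t) \<le> (\<Sum>i\<in>I. weight_share hs i * loss i t) + 2 * \<beta> * \<gamma>"
proof -
  have "(\<Sum>x\<in>I. prob hs x * loss x t)
      = (1 - \<gamma>) * (\<Sum>i\<in>I. weight_share hs i * loss i t) + \<gamma> / card I * (\<Sum>i\<in>I. loss i t)"
  proof -
    have "(\<Sum>x\<in>I. prob hs x * loss x t)
        = (\<Sum>x\<in>I. (1 - \<gamma>) * (weight_share hs x * loss x t) + \<gamma> / card I * loss x t)"
      by (intro sum.cong) (simp_all add: prob_eq algebra_simps)
    then show ?thesis by (simp add: sum.distrib sum_distrib_left)
  qed
  also have "\<dots> \<le> (\<Sum>i\<in>I. weight_share hs i * loss i t) + \<gamma> / card I * (card I * (2 * \<beta>))"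
    using loss_bounds[OF _ assms] weight_share_nonneg gamma_pos gamma_less_1
      sum_bounded_above[of I "\<lambda>i. loss i t" "2 * \<beta>"]
    by (intro add_mono mult_left_mono sum_nonneg mult_left_le_one_le mult_nonneg_nonneg) auto
  also have "\<dots> = (\<Sum>i\<in>I. weight_share hs i * loss i t) + 2 * \<beta> * \<gamma>"
    using finite_I I_nonempty by simp
  finally show ?thesis .
qed

lemma weighted_second_moment_le:
  assumes "t \<in> {1..T}" "\<gamma> \<le> 1/2"
  shows "(\<Sum>i\<in>I. weight_share hs i * (loss i t)\<^sup>2 / prob_at_least hs i) \<le> 8 * \<beta>\<^sup>2 * (1 + ln (card I / \<gamma>))"
proof -
  have "(\<Sum>i\<in>I. weight_share hs i * (loss i t)\<^sup>2 / prob_at_least hs i)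
      \<le> (\<Sum>i\<in>I. 8 * \<beta>\<^sup>2 * (prob hs i / prob_at_least hs i))"
  proof (intro sum_mono)
    fix i assume i: "i \<in> I"
    have "1 / 2 * weight_share hs i \<le> (1 - \<gamma>) * weight_share hs i"
      using assms(2) weight_share_nonneg[of hs i] by (intro mult_right_mono) auto
    moreover have "0 \<le> \<gamma> / card I"
      using gamma_pos by simp
    ultimately have "weight_share hs i \<le> 2 * prob hs i"
      using prob_eq[of hs i] by linarith
    moreover have "(loss i t)\<^sup>2 \<le> (2 * \<beta>)\<^sup>2"
      using loss_bounds[OF i assms(1)] by (intro power_mono) auto
    ultimately have "weight_share hs i * (loss i t)\<^sup>2 \<le> 2 * prob hs i * (2 * \<beta>)\<^sup>2"
      using weight_share_nonneg[of hs i] prob_pos[of hs i] by (intro mult_mono) auto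
    then have "weight_share hs i * (loss i t)\<^sup>2 \<le> 8 * \<beta>\<^sup>2 * prob hs i"
      by (simp add: power_mult_distrib mult_ac)
    then show "weight_share hs i * (loss i t)\<^sup>2 / prob_at_least hs i \<le> 8 * \<beta>\<^sup>2 * (prob hs i / prob_at_least hs i)"
      using prob_at_least_pos[OF i, of hs] by (simp add: divide_right_mono)
  qed
  also have "\<dots> = 8 * \<beta>\<^sup>2 * (\<Sum>i\<in>I. prob hs i / prob_at_least hs i)"
    by (simp add: sum_distrib_left)
  also have "\<dots> \<le> 8 * \<beta>\<^sup>2 * (1 + ln (card I / \<gamma>))"
    using sum_prob_div_prob_at_least_le by (intro mult_left_mono) auto
  finally show ?thesis .
qed

definition step_regret :: "nat \<Rightarrow> nat \<Rightarrow> nat list \<Rightarrow> real" where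
  "step_regret i\<^sub>0 x hs = loss x (Suc (length hs)) - loss i\<^sub>0 (Suc (length hs))"

lemma expected_step_regret_le:
  assumes "i\<^sub>0 \<in> I" "length hs < T" "\<gamma> \<le> 1/2"
  shows "(\<Sum>x\<in>I. prob hs x * step_regret i\<^sub>0 x hs)
    \<le> (\<Sum>x\<in>I. prob hs x * estimated_regret_step i\<^sub>0 x hs)
      + (2 * \<beta> * \<gamma> + 4 * \<eta> * \<beta>\<^sup>2 * (1 + ln (card I / \<gamma>)))"
proof -
  define t where "t = Suc (length hs)"
  have t: "t \<in> {1..T}" using assms(2) by (simp add: t_def)
  have "(\<Sum>x\<in>I. prob hs x * step_regret i\<^sub>0 x hs) = (\<Sum>x\<in>I. prob hs x * loss x t) - loss i\<^sub>0 t"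
    by (simp add: step_regret_def t_def right_diff_distrib sum_subtractf sum_prob flip: sum_distrib_right)
  moreover have "\<eta> / 2 * (\<Sum>i\<in>I. weight_share hs i * (loss i t)\<^sup>2 / prob_at_least hs i)
      \<le> \<eta> / 2 * (8 * \<beta>\<^sup>2 * (1 + ln (card I / \<gamma>)))"
    using weighted_second_moment_le[OF t assms(3)] eta_pos by (intro mult_left_mono) auto
  moreover have "\<eta> / 2 * (8 * \<beta>\<^sup>2 * (1 + ln (card I / \<gamma>))) = 4 * \<eta> * \<beta>\<^sup>2 * (1 + ln (card I / \<gamma>))"
    by simp
  ultimately show ?thesis
    using expected_estimated_regret_step[OF assms(1), of hs] expected_loss_le_weighted_loss[OF t, of hs]
    unfolding t_def by linarith
qed

lemma regret_eq_history_sum: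
  assumes "length hs = T"
    and "(\<Sum>t = 1..T. nv_cost h b i\<^sub>0 (d t)) = Min ((\<lambda>i. \<Sum>t = 1..T. nv_cost h b i (d t)) ` I)"
  shows "regret I h b d T (rev hs) = history_sum (step_regret i\<^sub>0) hs"
proof -
  have "history_sum (step_regret i\<^sub>0) hs = (\<Sum>t = 1..T. loss (rev hs ! (t - 1)) t - loss i\<^sub>0 t)"
    using history_sum_chronological[of "\<lambda>x t. loss x t - loss i\<^sub>0 t" hs] assms(1)
    unfolding step_regret_def[abs_def] by simp
  also have "\<dots> = (\<Sum>t = 1..T. nv_cost h b (rev hs ! (t - 1)) (d t)) - (\<Sum>t = 1..T. nv_cost h b i\<^sub>0 (d t))"
    by (simp add: loss_eq sum_subtractf)
  finally show ?thesis
    unfolding regret_def assms(2)[symmetric] by simp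
qed

lemma regret_le_beta:
  assumes "hs \<in> histories I T"
  shows "regret I h b d T (rev hs) \<le> T * \<beta>"
proof -
  have "(\<Sum>t = 1..T. nv_cost h b (rev hs ! (t - 1)) (d t)) \<le> (\<Sum>t = 1..T. \<beta>)"
  proof (intro sum_mono)
    fix t assume t: "t \<in> {1..T}"
    then have "rev hs ! (t - 1) \<in> set hs"
      using assms nth_mem[of "t - 1" "rev hs"] by (auto simp: histories_def)
    then show "nv_cost h b (rev hs ! (t - 1)) (d t) \<le> \<beta>"
      using assms t I_subset demand_le h_nonneg b_nonneg
      by (intro nv_cost_le_beta) (auto simp: histories_def)
  qed
  moreover have "0 \<le> Min ((\<lambda>i. \<Sum>t = 1..T. nv_cost h b i (d t)) ` I)"
    using finite_I I_nonempty h_nonneg b_nonneg by (simp add: sum_nonneg nv_cost_nonneg)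
  ultimately show ?thesis by (simp add: regret_def)
qed

lemma expected_regret_eq: "ewf_expected_regret I D h b \<eta> \<gamma> d T = E T (\<lambda>hs. regret I h b d T (rev hs))"
  by (simp add: ewf_expected_regret_def history_expectation_def histories_def
      ewf_path_prob_eq_history_prob)

lemma expected_regret_le_trivial: "ewf_expected_regret I D h b \<eta> \<gamma> d T \<le> T * \<beta>"
  using expectation_mono[of T _ "\<lambda>_. T * \<beta>"] regret_le_beta
  by (simp add: expected_regret_eq expectation_const)

lemma expected_regret_le:
  assumes "\<gamma> \<le> 1/2"
  shows "ewf_expected_regret I D h b \<eta> \<gamma> d T
    \<le> ln (card I) / \<eta> + T * (2 * \<beta> * \<gamma> + 4 * \<eta> * \<beta>\<^sup>2 * (1 + ln (card I / \<gamma>)))"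
proof -
  define C where "C = 2 * \<beta> * \<gamma> + 4 * \<eta> * \<beta>\<^sup>2 * (1 + ln (card I / \<gamma>))"
  define cost where "cost i = (\<Sum>t = 1..T. nv_cost h b i (d t))" for i
  have "Min (cost ` I) \<in> cost ` I"
    using finite_I I_nonempty by simp
  then obtain i\<^sub>0 where i\<^sub>0: "i\<^sub>0 \<in> I" "cost i\<^sub>0 = Min (cost ` I)"
    by (metis imageE)
  have "ewf_expected_regret I D h b \<eta> \<gamma> d T = E T (history_sum (step_regret i\<^sub>0))"
    unfolding expected_regret_eq using i\<^sub>0(2)
    by (intro expectation_cong) (simp add: regret_eq_history_sum histories_def cost_def)
  also have "\<dots> = (\<Sum>m<T. E m (\<lambda>hs. \<Sum>x\<in>I. prob hs x * step_regret i\<^sub>0 x hs))"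
    by (rule expectation_history_sum)
  also have "\<dots> \<le> (\<Sum>m<T. E m (\<lambda>hs. (\<Sum>x\<in>I. prob hs x * estimated_regret_step i\<^sub>0 x hs) + C))"
    using expected_step_regret_le[OF i\<^sub>0(1) _ assms]
    by (intro sum_mono expectation_mono) (auto simp: histories_def C_def)
  also have "\<dots> = E T (history_sum (estimated_regret_step i\<^sub>0)) + T * C"
    by (simp add: expectation_add expectation_const expectation_history_sum sum.distrib)
  also have "\<dots> \<le> ln (card I) / \<eta> + T * C"
    using expectation_mono[of T _ "\<lambda>_. ln (card I) / \<eta>"] history_sum_estimated_regret_le[OF _ i\<^sub>0(1)]
    by (simp add: expectation_const histories_def)
  finally show ?thesis by (simp add: C_def)
qed

end

section \<open>Tuning the parameters\<close>

lemma one_add_ln_le_ln_cube: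
  fixes x N :: real
  assumes "0 < x" "2 \<le> N"
  shows "1 + ln (x * N) \<le> ln (x * N ^ 3 + N + 2)"
proof -
  have "exp 1 \<le> N\<^sup>2"
    using exp_le power_mono[OF assms(2), of 2] by simp
  then have "exp 1 * (x * N) \<le> N\<^sup>2 * (x * N)"
    using assms by (intro mult_right_mono) auto
  also have "\<dots> \<le> x * N ^ 3 + N + 2"
    using assms by (simp add: power2_eq_square power3_eq_cube mult_ac)
  finally have "exp 1 * (x * N) \<le> x * N ^ 3 + N + 2" .
  moreover have "1 + ln (x * N) = ln (exp 1 * (x * N))"
    using assms by (simp add: ln_mult)
  moreover have "0 < exp 1 * (x * N)"
    using assms by simp
  ultimately show ?thesis
    by (metis ln_mono)
qed

lemma div_sqrt_add_mult_sqrt: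
  fixes a c :: real
  assumes "0 < a" "0 < c"
  shows "a / sqrt (a / c) + c * sqrt (a / c) = 2 * sqrt (a * c)"
proof -
  have "a / sqrt (a / c) = sqrt (a * c)" "c * sqrt (a / c) = sqrt (a * c)"
    using assms by (simp_all add: real_sqrt_divide real_sqrt_mult field_simps)
  then show ?thesis by simp
qed

lemma ewf_tuned_bound:
  fixes \<beta> T N :: real
  assumes "0 < \<beta>" "1 \<le> \<beta> * T" "2 \<le> N"
  defines "L \<equiv> ln (2 * \<beta> * T * N ^ 3 + N + 2)"
  defines "\<eta> \<equiv> sqrt (ln N / (4 * \<beta>\<^sup>2 * T * L))" and "\<gamma> \<equiv> 1 / (2 * \<beta> * T)"
  shows "ln N / \<eta> + T * (2 * \<beta> * \<gamma> + 4 * \<eta> * \<beta>\<^sup>2 * (1 + ln (N / \<gamma>)))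
    \<le> 4 * \<beta> * sqrt (T * ln N * L) + 1"
proof -
  have T: "0 < T"
    using assms(1,2) zero_less_mult_iff[of \<beta> T] by auto
  have "0 < ln N"
    using assms(3) by simp
  have "0 < L"
    using assms(1,3) T unfolding L_def by (intro ln_gt_zero) (simp add: add_nonneg_pos)
  have "1 + ln (N / \<gamma>) \<le> L"
    using one_add_ln_le_ln_cube[of "2 * \<beta> * T" N] assms(1,3) T by (simp add: L_def \<gamma>_def mult_ac)
  moreover have "0 \<le> 4 * \<eta> * \<beta>\<^sup>2 * T"
    using T \<open>0 < ln N\<close> \<open>0 < L\<close> by (simp add: \<eta>_def)
  ultimately have "(4 * \<eta> * \<beta>\<^sup>2 * T) * (1 + ln (N / \<gamma>)) \<le> (4 * \<eta> * \<beta>\<^sup>2 * T) * L"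
    by (rule mult_left_mono)
  then have "T * (4 * \<eta> * \<beta>\<^sup>2 * (1 + ln (N / \<gamma>))) \<le> 4 * \<beta>\<^sup>2 * T * L * \<eta>"
    by (simp add: mult_ac)
  moreover have "T * (2 * \<beta> * \<gamma>) = 1"
    using assms(1) T by (simp add: \<gamma>_def)
  moreover have "ln N / \<eta> + 4 * \<beta>\<^sup>2 * T * L * \<eta> = 4 * \<beta> * sqrt (T * ln N * L)"
    using div_sqrt_add_mult_sqrt[of "ln N" "4 * \<beta>\<^sup>2 * T * L"] \<open>0 < ln N\<close> \<open>0 < L\<close> assms(1) T
    by (simp add: \<eta>_def real_sqrt_mult mult_ac)
  ultimately show ?thesis
    by (simp add: distrib_left)
qed

context ewf
begin

lemma expected_regret_le_tuned:
  defines "N \<equiv> real (card I)"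
  defines "L \<equiv> ln (2 * \<beta> * T * N ^ 3 + N + 2)"
  assumes "2 \<le> N" and "\<eta> = sqrt (ln N / (4 * \<beta>\<^sup>2 * T * L))" and "\<gamma> = 1 / (2 * \<beta> * T)"
  shows "ewf_expected_regret I D h b \<eta> \<gamma> d T \<le> 4 * \<beta> * sqrt (T * ln N * L) + 1"
proof (cases "\<beta> * T < 1")
  case True
  have "0 \<le> \<beta>"
    using h_nonneg b_nonneg by (simp add: ewf_beta_def)
  with assms(3) have "0 \<le> 4 * \<beta> * sqrt (T * ln N * L)"
    unfolding L_def by (simp add: add_nonneg_pos)
  moreover have "ewf_expected_regret I D h b \<eta> \<gamma> d T \<le> \<beta> * T"
    using expected_regret_le_trivial by (simp add: mult.commute)
  ultimately show ?thesis
    using True by linarith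
next
  case False
  then have "0 < \<beta>" "\<gamma> \<le> 1/2"
    using h_nonneg b_nonneg zero_less_mult_iff[of \<beta> T] by (auto simp: ewf_beta_def assms(5) field_simps)
  then have "ewf_expected_regret I D h b \<eta> \<gamma> d T
      \<le> ln N / \<eta> + T * (2 * \<beta> * \<gamma> + 4 * \<eta> * \<beta>\<^sup>2 * (1 + ln (N / \<gamma>)))"
    by (simp add: expected_regret_le N_def)
  also have "\<dots> \<le> 4 * \<beta> * sqrt (T * ln N * L) + 1"
    using ewf_tuned_bound[of \<beta> T N] \<open>0 < \<beta>\<close> False assms(3-5) unfolding L_def by simp
  finally show ?thesis .
qed

end

theorem theorem1:
  fixes T D :: nat and h b :: real and I :: "nat set" and d :: "nat \<Rightarrow> nat"
  assumes "T \<ge> 1" and "D \<ge> 1" and "h > 0" and "b > 0"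
    and "I \<subseteq> {0..D}" and "card I \<ge> 2"
    and "\<forall>t\<in>{1..T}. d t \<le> D"
    and "2 * ewf_beta D h b * real T > 1"
  shows "ewf_expected_regret I D h b
           (sqrt (ln (real (card I)) /
              (4 * (ewf_beta D h b)\<^sup>2 * real T *
               ln (2 * ewf_beta D h b * real T * real (card I) ^ 3 + real (card I) + 2))))
           (1 / (2 * ewf_beta D h b * real T)) d T
         \<le> 4 * ewf_beta D h b * sqrt (real T * ln (real (card I)) *
              ln (2 * ewf_beta D h b * real T * real (card I) ^ 3 + real (card I) + 2))
           + 2 * ewf_beta D h b * sqrt (real T * ln (real (card I))) + 1"
proof -
  define \<beta> N where "\<beta> = ewf_beta D h b" and "N = real (card I)"
  define L where "L = ln (2 * \<beta> * real T * N ^ 3 + N + 2)"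
  define \<eta> \<gamma> where "\<eta> = sqrt (ln N / (4 * \<beta>\<^sup>2 * real T * L))" and "\<gamma> = 1 / (2 * \<beta> * real T)"
  have \<beta>: "0 < \<beta>" and N: "2 \<le> N" and T: "0 < real T"
    using assms by (simp_all add: \<beta>_def N_def ewf_beta_def)
  then have "0 < \<eta>"
    by (simp add: \<eta>_def L_def add_nonneg_pos)
  moreover have "0 < \<gamma>" "\<gamma> < 1"
    using \<beta> T assms(8) by (simp_all add: \<gamma>_def \<beta>_def)
  ultimately interpret ewf I D h b \<eta> \<gamma> d T
    using assms(3-7) by unfold_locales (auto simp: card_ge_0_finite)
  have "ewf_expected_regret I D h b \<eta> \<gamma> d T \<le> 4 * \<beta> * sqrt (real T * ln N * L) + 1"
    using expected_regret_le_tuned assms(6) unfolding \<eta>_def \<gamma>_def L_def N_def \<beta>_def by simp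
  moreover have "0 \<le> 2 * \<beta> * sqrt (real T * ln N)"
    using \<beta> N by simp
  ultimately show ?thesis
    unfolding \<beta>_def N_def L_def \<eta>_def \<gamma>_def by linarith
qed

end
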